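(* ${\sf ITL}^0_{\circ}$ is complete for the class of expanding posets, and ${\sf ITL}^{\sf FS}_{\circ}$ is complete for the class of persistent posets; that is, every $\mathcal L_\circ$-formula valid on all expanding posets belongs to ${\sf ITL}^0_\circ$, and every $\mathcal L_\circ$-formula valid on all persistent posets belongs to ${\sf ITL}^{\sf FS}_\circ$.
   Context: Syntax: fix a countably infinite set $\mathbb P$ of propositional variables. $\mathcal L_\circ$ is given by $\varphi ::= \bot \mid p \mid \varphi\wedge\varphi \mid \varphi\vee\varphi \mid \varphi\to\varphi \mid \circ\varphi$ with $p\in\mathbb P$; $\neg\varphi:=\varphi\to\bot$. Semantics: a dynamical system is $(X,\mathcal T,f)$ with $(X,\mathcal T)$ a topological space and $f\colon X\to X$ continuous. A valuation assigns to each formula an open set with $[\![\bot]\!]=\varnothing$, $[\![\varphi\wedge\psi]\!]=[\![\varphi]\!]\cap[\![\psi]\!]$, $[\![\varphi\vee\psi]\!]=[\![\varphi]\!]\cup[\![\psi]\!]$, $[\![\varphi\to\psi]\!]=\big((X\setminus[\![\varphi]\!])\cup[\![\psi]\!]\big)^\circ$, $[\![\circ\varphi]\!]=f^{-1}[\![\varphi]\!]$. A formula is valid on a class if $[\![\varphi]\!]=X$ for every system of the class and every valuation. An expanding poset is a dynamical system whose topology is the up-set topology of a partial order $\preccurlyeq$ (open sets = upward closed sets); equivalently $f$ is monotone. A persistent poset is an expanding poset whose map $f$ is moreover open (equivalently: whenever $f(w)\preccurlyeq v'$ there is $w'\succcurlyeq w$ with $f(w')=v'$). Logics: ${\sf ITL}^0_\circ$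 is the least set of $\mathcal L_\circ$-formulas containing all substitution instances of the axioms of intuitionistic propositional logic and of (N1) $\neg\circ\bot$, (N2) $\circ\varphi\wedge\circ\psi\to\circ(\varphi\wedge\psi)$, (N3) $\circ(\varphi\vee\psi)\to\circ\varphi\vee\circ\psi$, (N4) $\circ(\varphi\to\psi)\to(\circ\varphi\to\circ\psi)$, closed under modus ponens and the rule from $\varphi$ infer $\circ\varphi$. ${\sf ITL}^{\sf FS}_\circ$ is defined in the same way but additionally with the axiom (N5) $(\circ\varphi\to\circ\psi)\to\circ(\varphi\to\psi)$. *)

theory Defs
  imports Main
begin

datatype form =
    Bot
  | Var nat
  | And form form
  | Or form form
  | Imp form form
  | Next form

definition Neg :: "form \<Rightarrow> form" where
  "Neg \<phi> = Imp \<phi> Bot"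

text \<open>A partial order le on a carrier set W; the up-set topology on W has as open
  sets exactly the upward closed subsets of W.\<close>

definition partial_order_on_set :: "'w set \<Rightarrow> ('w \<Rightarrow> 'w \<Rightarrow> bool) \<Rightarrow> bool" where
  "partial_order_on_set W le \<longleftrightarrow>
     (\<forall>w\<in>W. le w w) \<and>
     (\<forall>u\<in>W. \<forall>v\<in>W. \<forall>w\<in>W. le u v \<longrightarrow> le v w \<longrightarrow> le u w) \<and>
     (\<forall>u\<in>W. \<forall>v\<in>W. le u v \<longrightarrow> le v u \<longrightarrow> u = v)"

definition up_open :: "'w set \<Rightarrow> ('w \<Rightarrow> 'w \<Rightarrow> bool) \<Rightarrow> 'w set \<Rightarrow> bool" where
  "up_open W le S \<longleftrightarrow> S \<subseteq> W \<and> (\<forall>u\<in>S. \<forall>v\<in>W. le u v \<longrightarrow> v \<in> S)"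

definition up_interior :: "'w set \<Rightarrow> ('w \<Rightarrow> 'w \<Rightarrow> bool) \<Rightarrow> 'w set \<Rightarrow> 'w set" where
  "up_interior W le S = {w \<in> W. \<forall>v\<in>W. le w v \<longrightarrow> v \<in> S}"

text \<open>Expanding poset: f : W \<rightarrow> W continuous for the up-set topology, i.e. monotone.\<close>
definition expanding_poset :: "'w set \<Rightarrow> ('w \<Rightarrow> 'w \<Rightarrow> bool) \<Rightarrow> ('w \<Rightarrow> 'w) \<Rightarrow> bool" where
  "expanding_poset W le f \<longleftrightarrow>
     partial_order_on_set W le \<and>
     (\<forall>w\<in>W. f w \<in> W) \<and>
     (\<forall>u\<in>W. \<forall>v\<in>W. le u v \<longrightarrow> le (f u) (f v))"

text \<open>Persistent poset: expanding poset whose map is moreover open.\<close>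
definition persistent_poset :: "'w set \<Rightarrow> ('w \<Rightarrow> 'w \<Rightarrow> bool) \<Rightarrow> ('w \<Rightarrow> 'w) \<Rightarrow> bool" where
  "persistent_poset W le f \<longleftrightarrow>
     expanding_poset W le f \<and>
     (\<forall>w\<in>W. \<forall>v'\<in>W. le (f w) v' \<longrightarrow> (\<exists>w'\<in>W. le w w' \<and> f w' = v'))"

fun eval :: "'w set \<Rightarrow> ('w \<Rightarrow> 'w \<Rightarrow> bool) \<Rightarrow> ('w \<Rightarrow> 'w) \<Rightarrow> (nat \<Rightarrow> 'w set) \<Rightarrow> form \<Rightarrow> 'w set" where
  "eval W le f V Bot = {}"
| "eval W le f V (Var p) = V p"
| "eval W le f V (And \<phi> \<psi>) = eval W le f V \<phi> \<inter> eval W le f V \<psi>"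
| "eval W le f V (Or \<phi> \<psi>) = eval W le f V \<phi> \<union> eval W le f V \<psi>"
| "eval W le f V (Imp \<phi> \<psi>) =
     up_interior W le ((W - eval W le f V \<phi>) \<union> eval W le f V \<psi>)"
| "eval W le f V (Next \<phi>) = {w \<in> W. f w \<in> eval W le f V \<phi>}"

definition valuation :: "'w set \<Rightarrow> ('w \<Rightarrow> 'w \<Rightarrow> bool) \<Rightarrow> (nat \<Rightarrow> 'w set) \<Rightarrow> bool" where
  "valuation W le V \<longleftrightarrow> (\<forall>p. up_open W le (V p))"

text \<open>Since HOL cannot quantify
  over types inside a formula, the carriers range over all subsets of the fixed type
  form set set (of cardinality beyond the continuum).\<close>

type_synonym world = "form set set"

definition valid_expanding :: "form \<Rightarrow> bool" where
  "valid_expanding \<phi> \<longleftrightarrow>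
     (\<forall>(W :: world set) le f V. expanding_poset W le f \<longrightarrow> valuation W le V \<longrightarrow>
        eval W le f V \<phi> = W)"

definition valid_persistent :: "form \<Rightarrow> bool" where
  "valid_persistent \<phi> \<longleftrightarrow>
     (\<forall>(W :: world set) le f V. persistent_poset W le f \<longrightarrow> valuation W le V \<longrightarrow>
        eval W le f V \<phi> = W)"

inductive deriv :: "bool \<Rightarrow> form \<Rightarrow> bool" for fs :: bool where
  ax_K: "deriv fs (Imp \<phi> (Imp \<psi> \<phi>))"
| ax_S: "deriv fs (Imp (Imp \<phi> (Imp \<psi> \<chi>)) (Imp (Imp \<phi> \<psi>) (Imp \<phi> \<chi>)))"
| ax_conjE1: "deriv fs (Imp (And \<phi> \<psi>) \<phi>)"
| ax_conjE2: "deriv fs (Imp (And \<phi> \<psi>) \<psi>)"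
| ax_conjI: "deriv fs (Imp \<phi> (Imp \<psi> (And \<phi> \<psi>)))"
| ax_disjI1: "deriv fs (Imp \<phi> (Or \<phi> \<psi>))"
| ax_disjI2: "deriv fs (Imp \<psi> (Or \<phi> \<psi>))"
| ax_disjE: "deriv fs (Imp (Imp \<phi> \<chi>) (Imp (Imp \<psi> \<chi>) (Imp (Or \<phi> \<psi>) \<chi>)))"
| ax_efq: "deriv fs (Imp Bot \<phi>)"
| ax_N1: "deriv fs (Neg (Next Bot))"
| ax_N2: "deriv fs (Imp (And (Next \<phi>) (Next \<psi>)) (Next (And \<phi> \<psi>)))"
| ax_N3: "deriv fs (Imp (Next (Or \<phi> \<psi>)) (Or (Next \<phi>) (Next \<psi>)))"
| ax_N4: "deriv fs (Imp (Next (Imp \<phi> \<psi>)) (Imp (Next \<phi>) (Next \<psi>)))"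
| ax_N5: "fs \<Longrightarrow> deriv fs (Imp (Imp (Next \<phi>) (Next \<psi>)) (Next (Imp \<phi> \<psi>)))"
| mp: "deriv fs (Imp \<phi> \<psi>) \<Longrightarrow> deriv fs \<phi> \<Longrightarrow> deriv fs \<psi>"
| nec: "deriv fs \<phi> \<Longrightarrow> deriv fs (Next \<phi>)"

definition ITL0 :: "form \<Rightarrow> bool" where
  "ITL0 = deriv False"

definition ITLFS :: "form \<Rightarrow> bool" where
  "ITLFS = deriv True"

end

theory Submission
  imports Defs
begin

text \<open>The worlds are the prime theories of the logic, ordered by inclusion,
  and the map sends a theory \<Gamma> to its successor {\<phi>. \<circ>\<phi> \<in> \<Gamma>}, which is again a prime theory
  by (N1)--(N4). The truth lemma says that a formula holds at a theory iff it belongs to it; its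
  implication case is Lindenbaum's lemma. Hence a formula that is not derivable fails at some
  world. For ITL^FS the map is moreover open: by (N5), every prime theory containing the
  successor of \<Gamma> is the successor of some prime extension of \<Gamma>.\<close>

text \<open>Derivability from hypotheses: necessitation is available only through deriv, i.e. for
  theorems, which is what makes the deduction theorem hold.\<close>

inductive ded :: "bool \<Rightarrow> form set \<Rightarrow> form \<Rightarrow> bool" for fs \<Gamma> where
  ded_hyp: "\<phi> \<in> \<Gamma> \<Longrightarrow> ded fs \<Gamma> \<phi>"
| ded_deriv: "deriv fs \<phi> \<Longrightarrow> ded fs \<Gamma> \<phi>"
| ded_mp: "ded fs \<Gamma> (Imp \<phi> \<psi>) \<Longrightarrow> ded fs \<Gamma> \<phi> \<Longrightarrow> ded fs \<Gamma> \<psi>"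

lemma deriv_Imp_refl: "deriv fs (Imp \<phi> \<phi>)"
  by (meson deriv.ax_K deriv.ax_S deriv.mp)

lemma deriv_Next_mono: "deriv fs (Imp \<phi> \<psi>) \<Longrightarrow> deriv fs (Imp (Next \<phi>) (Next \<psi>))"
  by (meson deriv.ax_N4 deriv.mp deriv.nec)

lemma deriv_Or_Next: "deriv fs (Imp (Or (Next \<phi>) (Next \<psi>)) (Next (Or \<phi> \<psi>)))"
  by (meson deriv.ax_disjE deriv.ax_disjI1 deriv.ax_disjI2 deriv.mp deriv_Next_mono)

lemma ded_mono: "ded fs \<Gamma> \<phi> \<Longrightarrow> \<Gamma> \<subseteq> \<Delta> \<Longrightarrow> ded fs \<Delta> \<phi>"
  by (induction rule: ded.induct) (auto intro: ded.intros)

lemma ded_emptyD: "ded fs {} \<phi> \<Longrightarrow> deriv fs \<phi>"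
  by (induction rule: ded.induct) (auto intro: deriv.intros)

lemma ded_ImpI: "ded fs (insert \<phi> \<Gamma>) \<psi> \<Longrightarrow> ded fs \<Gamma> (Imp \<phi> \<psi>)"
proof (induction rule: ded.induct)
  case (ded_hyp \<chi>)
  then show ?case
    by (metis ded.intros deriv_Imp_refl deriv.ax_K insertE)
next
  case (ded_deriv \<chi>)
  then show ?case by (meson ded.intros deriv.ax_K)
next
  case (ded_mp \<chi> \<psi>)
  then show ?case by (meson ded.intros deriv.ax_S)
qed

lemma ded_deduction: "ded fs (insert \<phi> \<Gamma>) \<psi> \<longleftrightarrow> ded fs \<Gamma> (Imp \<phi> \<psi>)"
  by (meson ded_ImpI ded.ded_hyp ded.ded_mp ded_mono insertI1 subset_insertI)

lemma ded_Imp_trans: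
  assumes "ded fs \<Gamma> (Imp \<phi> \<psi>)" "ded fs \<Gamma> (Imp \<psi> \<chi>)"
  shows "ded fs \<Gamma> (Imp \<phi> \<chi>)"
proof -
  have "ded fs (insert \<phi> \<Gamma>) \<psi>" "ded fs (insert \<phi> \<Gamma>) (Imp \<psi> \<chi>)"
    using assms ded_deduction ded_mono[OF _ subset_insertI] by blast+
  then show ?thesis
    using ded.ded_mp ded_ImpI by blast
qed

lemma ded_Union_chain:
  assumes "ded fs (\<Union>\<C>) \<phi>" "\<C> \<noteq> {}" "subset.chain \<A> \<C>"
  shows "\<exists>\<Gamma>\<in>\<C>. ded fs \<Gamma> \<phi>"
  using assms(1)
proof (induction rule: ded.induct)
  case (ded_hyp \<phi>)
  then show ?case using ded.ded_hyp by blast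
next
  case (ded_deriv \<phi>)
  then show ?case using assms(2) ded.ded_deriv by blast
next
  case (ded_mp \<phi> \<psi>)
  then obtain \<Gamma> \<Delta> where "\<Gamma> \<in> \<C>" "ded fs \<Gamma> (Imp \<phi> \<psi>)" "\<Delta> \<in> \<C>" "ded fs \<Delta> \<phi>"
    by blast
  moreover have "\<Gamma> \<subseteq> \<Delta> \<or> \<Delta> \<subseteq> \<Gamma>"
    using assms(3) \<open>\<Gamma> \<in> \<C>\<close> \<open>\<Delta> \<in> \<C>\<close> unfolding subset.chain_def by blast
  ultimately show ?case by (meson ded.ded_mp ded_mono)
qed

lemma ded_Next_image: "ded fs \<Gamma> \<phi> \<Longrightarrow> ded fs (Next ` \<Gamma>) (Next \<phi>)"
proof (induction rule: ded.induct)
  case (ded_mp \<phi> \<psi>)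
  then show ?case by (meson ded.intros deriv.ax_N4)
qed (simp_all add: ded.intros deriv.nec)

lemma ded_Un_Next_imageD:
  assumes "ded fs (\<Gamma> \<union> Next ` A) \<chi>" "A \<noteq> {}"
    and And_closed: "\<And>\<phi> \<psi>. \<phi> \<in> A \<Longrightarrow> \<psi> \<in> A \<Longrightarrow> And \<phi> \<psi> \<in> A"
  shows "\<exists>\<alpha>\<in>A. ded fs \<Gamma> (Imp (Next \<alpha>) \<chi>)"
  using assms(1)
proof (induction rule: ded.induct)
  case (ded_hyp \<phi>)
  then consider "\<phi> \<in> \<Gamma>" | "\<phi> \<in> Next ` A" by blast
  then show ?case
  proof cases
    case 1
    then show ?thesis using assms(2) by (meson all_not_in_conv ded.intros deriv.ax_K)
  next
    case 2
    then show ?thesis using ded.ded_deriv deriv_Imp_refl by blast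
  qed
next
  case (ded_deriv \<phi>)
  then show ?case
    using assms(2) by (meson all_not_in_conv ded.intros deriv.ax_K)
next
  case (ded_mp \<phi> \<psi>)
  then obtain \<alpha> \<beta> where "\<alpha> \<in> A" "ded fs \<Gamma> (Imp (Next \<alpha>) (Imp \<phi> \<psi>))"
    and "\<beta> \<in> A" "ded fs \<Gamma> (Imp (Next \<beta>) \<phi>)"
    by blast
  moreover have "ded fs (insert (Next (And \<alpha> \<beta>)) \<Gamma>) (Next \<alpha>)"
    "ded fs (insert (Next (And \<alpha> \<beta>)) \<Gamma>) (Next \<beta>)"
    by (meson ded.intros deriv.ax_conjE1 deriv.ax_conjE2 deriv_Next_mono insertI1)+
  ultimately have "ded fs (insert (Next (And \<alpha> \<beta>)) \<Gamma>) \<psi>"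
    by (meson ded.ded_mp ded_mono subset_insertI)
  then show ?case
    using And_closed \<open>\<alpha> \<in> A\<close> \<open>\<beta> \<in> A\<close> ded_ImpI by blast
qed

definition prime_theory :: "bool \<Rightarrow> form set \<Rightarrow> bool" where
  "prime_theory fs \<Gamma> \<longleftrightarrow>
     (\<forall>\<phi>. ded fs \<Gamma> \<phi> \<longrightarrow> \<phi> \<in> \<Gamma>) \<and> Bot \<notin> \<Gamma> \<and>
     (\<forall>\<phi> \<psi>. Or \<phi> \<psi> \<in> \<Gamma> \<longrightarrow> \<phi> \<in> \<Gamma> \<or> \<psi> \<in> \<Gamma>)"

lemma prime_theory_ded: "prime_theory fs \<Gamma> \<Longrightarrow> ded fs \<Gamma> \<phi> \<Longrightarrow> \<phi> \<in> \<Gamma>"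
  unfolding prime_theory_def by blast

lemma prime_theory_deriv: "prime_theory fs \<Gamma> \<Longrightarrow> deriv fs \<phi> \<Longrightarrow> \<phi> \<in> \<Gamma>"
  by (simp add: ded.ded_deriv prime_theory_ded)

lemma prime_theory_mp: "prime_theory fs \<Gamma> \<Longrightarrow> Imp \<phi> \<psi> \<in> \<Gamma> \<Longrightarrow> \<phi> \<in> \<Gamma> \<Longrightarrow> \<psi> \<in> \<Gamma>"
  by (meson ded.ded_hyp ded.ded_mp prime_theory_ded)

lemma prime_theory_Bot: "prime_theory fs \<Gamma> \<Longrightarrow> Bot \<notin> \<Gamma>"
  unfolding prime_theory_def by blast

lemma prime_theory_And_iff:
  "prime_theory fs \<Gamma> \<Longrightarrow> And \<phi> \<psi> \<in> \<Gamma> \<longleftrightarrow> \<phi> \<in> \<Gamma> \<and> \<psi> \<in> \<Gamma>"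
  by (meson deriv.ax_conjE1 deriv.ax_conjE2 deriv.ax_conjI prime_theory_deriv prime_theory_mp)

lemma prime_theory_Or_iff:
  "prime_theory fs \<Gamma> \<Longrightarrow> Or \<phi> \<psi> \<in> \<Gamma> \<longleftrightarrow> \<phi> \<in> \<Gamma> \<or> \<psi> \<in> \<Gamma>"
  using prime_theory_def[of fs \<Gamma>]
  by (meson deriv.ax_disjI1 deriv.ax_disjI2 prime_theory_deriv prime_theory_mp)

text \<open>Closure of D under disjunction (up to derivability) is what makes a maximal theory
  avoiding D prime.\<close>

lemma lindenbaum:
  assumes "D \<noteq> {}"
    and Or_closed: "\<And>\<delta> \<epsilon>. \<delta> \<in> D \<Longrightarrow> \<epsilon> \<in> D \<Longrightarrow> \<exists>\<gamma>\<in>D. deriv fs (Imp (Or \<delta> \<epsilon>) \<gamma>)"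
    and avoids: "\<And>\<delta>. \<delta> \<in> D \<Longrightarrow> \<not> ded fs \<Gamma> \<delta>"
  shows "\<exists>M. \<Gamma> \<subseteq> M \<and> prime_theory fs M \<and> M \<inter> D = {}"
proof -
  define \<A> where "\<A> = {\<Delta>. \<Gamma> \<subseteq> \<Delta> \<and> (\<forall>\<delta>\<in>D. \<not> ded fs \<Delta> \<delta>)}"
  have "\<Union>\<C> \<in> \<A>" if "\<C> \<noteq> {}" and chain: "subset.chain \<A> \<C>" for \<C>
  proof -
    have members: "\<Gamma> \<subseteq> \<Delta> \<and> (\<forall>\<delta>\<in>D. \<not> ded fs \<Delta> \<delta>)" if "\<Delta> \<in> \<C>" for \<Delta>
      using chain that unfolding \<A>_def subset.chain_def by blast
    have "\<Gamma> \<subseteq> \<Union>\<C>"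
      using members \<open>\<C> \<noteq> {}\<close> by blast
    moreover have "\<not> ded fs (\<Union>\<C>) \<delta>" if "\<delta> \<in> D" for \<delta>
      using ded_Union_chain[OF _ \<open>\<C> \<noteq> {}\<close> chain] members that by blast
    ultimately show ?thesis
      unfolding \<A>_def by blast
  qed
  moreover have "\<Gamma> \<in> \<A>"
    using avoids unfolding \<A>_def by blast
  ultimately obtain M where "M \<in> \<A>" and maximal: "\<And>\<Delta>. \<Delta> \<in> \<A> \<Longrightarrow> M \<subseteq> \<Delta> \<Longrightarrow> \<Delta> = M"
    using subset_Zorn_nonempty[of \<A>] by blast
  then have "\<Gamma> \<subseteq> M" and M_avoids: "\<And>\<delta>. \<delta> \<in> D \<Longrightarrow> \<not> ded fs M \<delta>"
    unfolding \<A>_def by auto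
  have refutes: "\<exists>\<delta>\<in>D. ded fs M (Imp \<phi> \<delta>)" if "\<phi> \<notin> M" for \<phi>
  proof (rule ccontr)
    assume "\<not> ?thesis"
    then have "insert \<phi> M \<in> \<A>"
      using \<open>\<Gamma> \<subseteq> M\<close> by (auto simp: \<A>_def ded_deduction)
    then show False
      using maximal that by blast
  qed
  have closed: "\<phi> \<in> M" if "ded fs M \<phi>" for \<phi>
  proof (rule ccontr)
    assume "\<phi> \<notin> M"
    then obtain \<delta> where "\<delta> \<in> D" "ded fs M (Imp \<phi> \<delta>)"
      using refutes by blast
    then show False
      using M_avoids ded.ded_mp[OF _ that] by blast
  qed
  have "Bot \<notin> M"
  proof
    assume "Bot \<in> M"
    obtain \<delta> where "\<delta> \<in> D"
      using \<open>D \<noteq> {}\<close> by blast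
    moreover have "ded fs M \<delta>"
      using ded.ded_mp[OF ded.ded_deriv[OF deriv.ax_efq] ded.ded_hyp[OF \<open>Bot \<in> M\<close>]] .
    ultimately show False
      using M_avoids by blast
  qed
  moreover have "\<phi> \<in> M \<or> \<psi> \<in> M" if "Or \<phi> \<psi> \<in> M" for \<phi> \<psi>
  proof (rule ccontr)
    assume "\<not> ?thesis"
    then obtain \<delta> \<epsilon> where "\<delta> \<in> D" "\<epsilon> \<in> D"
      and \<phi>\<delta>: "ded fs M (Imp \<phi> \<delta>)" and \<psi>\<epsilon>: "ded fs M (Imp \<psi> \<epsilon>)"
      using refutes by blast
    then obtain \<gamma> where "\<gamma> \<in> D" and \<gamma>: "ded fs M (Imp (Or \<delta> \<epsilon>) \<gamma>)"
      using Or_closed ded.ded_deriv by blast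
    have \<phi>\<gamma>: "ded fs M (Imp \<phi> \<gamma>)"
      using ded_Imp_trans[OF \<phi>\<delta> ded_Imp_trans[OF ded.ded_deriv[OF deriv.ax_disjI1] \<gamma>]] .
    have \<psi>\<gamma>: "ded fs M (Imp \<psi> \<gamma>)"
      using ded_Imp_trans[OF \<psi>\<epsilon> ded_Imp_trans[OF ded.ded_deriv[OF deriv.ax_disjI2] \<gamma>]] .
    have "ded fs M \<gamma>"
      using ded.ded_mp[OF ded.ded_mp[OF ded.ded_mp[OF ded.ded_deriv[OF deriv.ax_disjE] \<phi>\<gamma>] \<psi>\<gamma>]
          ded.ded_hyp[OF \<open>Or \<phi> \<psi> \<in> M\<close>]] .
    then show False
      using M_avoids \<open>\<gamma> \<in> D\<close> by blast
  qed
  ultimately have "prime_theory fs M"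
    unfolding prime_theory_def using closed by blast
  moreover have "M \<inter> D = {}"
    using M_avoids ded.ded_hyp by blast
  ultimately show ?thesis
    using \<open>\<Gamma> \<subseteq> M\<close> by blast
qed

lemma lindenbaum_formula:
  assumes "\<not> ded fs \<Gamma> \<phi>"
  shows "\<exists>M. \<Gamma> \<subseteq> M \<and> prime_theory fs M \<and> \<phi> \<notin> M"
proof -
  have "deriv fs (Imp (Or \<phi> \<phi>) \<phi>)"
    by (meson deriv.ax_disjE deriv.mp deriv_Imp_refl)
  then show ?thesis
    using lindenbaum[of "{\<phi>}"] assms by blast
qed

lemma prime_theory_Imp_iff:
  assumes "prime_theory fs \<Gamma>"
  shows "Imp \<phi> \<psi> \<in> \<Gamma> \<longleftrightarrow> (\<forall>\<Delta>. prime_theory fs \<Delta> \<longrightarrow> \<Gamma> \<subseteq> \<Delta> \<longrightarrow> \<phi> \<in> \<Delta> \<longrightarrow> \<psi> \<in> \<Delta>)"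
proof
  assume "Imp \<phi> \<psi> \<in> \<Gamma>"
  then show "\<forall>\<Delta>. prime_theory fs \<Delta> \<longrightarrow> \<Gamma> \<subseteq> \<Delta> \<longrightarrow> \<phi> \<in> \<Delta> \<longrightarrow> \<psi> \<in> \<Delta>"
    using prime_theory_mp by blast
next
  assume extensions: "\<forall>\<Delta>. prime_theory fs \<Delta> \<longrightarrow> \<Gamma> \<subseteq> \<Delta> \<longrightarrow> \<phi> \<in> \<Delta> \<longrightarrow> \<psi> \<in> \<Delta>"
  show "Imp \<phi> \<psi> \<in> \<Gamma>"
  proof (rule ccontr)
    assume "Imp \<phi> \<psi> \<notin> \<Gamma>"
    then have "\<not> ded fs (insert \<phi> \<Gamma>) \<psi>"
      using assms prime_theory_ded ded_deduction by blast
    then show False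
      using lindenbaum_formula extensions by blast
  qed
qed

definition successor :: "form set \<Rightarrow> form set" where
  "successor \<Gamma> = {\<phi>. Next \<phi> \<in> \<Gamma>}"

lemma prime_theory_successor:
  assumes "prime_theory fs \<Gamma>"
  shows "prime_theory fs (successor \<Gamma>)"
  unfolding prime_theory_def
proof (intro conjI allI impI)
  fix \<phi> assume "ded fs (successor \<Gamma>) \<phi>"
  then have "ded fs (Next ` successor \<Gamma>) (Next \<phi>)"
    by (rule ded_Next_image)
  then have "ded fs \<Gamma> (Next \<phi>)"
    by (rule ded_mono) (auto simp: successor_def)
  then show "\<phi> \<in> successor \<Gamma>"
    using assms prime_theory_ded by (simp add: successor_def)
next
  have "Imp (Next Bot) Bot \<in> \<Gamma>"
    using assms deriv.ax_N1 prime_theory_deriv unfolding Neg_def by blast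
  then show "Bot \<notin> successor \<Gamma>"
    using assms prime_theory_Bot prime_theory_mp unfolding successor_def by blast
next
  fix \<phi> \<psi> assume "Or \<phi> \<psi> \<in> successor \<Gamma>"
  then have "Or (Next \<phi>) (Next \<psi>) \<in> \<Gamma>"
    using assms deriv.ax_N3 prime_theory_deriv prime_theory_mp unfolding successor_def by blast
  then show "\<phi> \<in> successor \<Gamma> \<or> \<psi> \<in> successor \<Gamma>"
    using assms prime_theory_Or_iff unfolding successor_def by blast
qed

text \<open>M is a prime extension of \<Gamma> \<union> \<circ>\<Delta> avoiding every \<circ>\<psi> with \<psi> \<notin> \<Delta>. It exists by
  (N5): if \<circ>\<psi> followed from \<Gamma> \<union> \<circ>\<Delta>, it would follow from \<Gamma> and a single \<circ>\<alpha> with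
  \<alpha> \<in> \<Delta>, so \<circ>(\<alpha> \<rightarrow> \<psi>) \<in> \<Gamma> and hence \<psi> \<in> \<Delta>.\<close>

lemma prime_theory_successor_preimage:
  assumes \<Gamma>: "prime_theory True \<Gamma>" and \<Delta>: "prime_theory True \<Delta>"
    and "successor \<Gamma> \<subseteq> \<Delta>"
  shows "\<exists>M. \<Gamma> \<subseteq> M \<and> prime_theory True M \<and> successor M = \<Delta>"
proof -
  define D where "D = {Next \<psi> | \<psi>. \<psi> \<notin> \<Delta>}"
  have D_nonempty: "D \<noteq> {}"
    using \<Delta> prime_theory_Bot unfolding D_def by blast
  have D_Or_closed: "\<exists>\<gamma>\<in>D. deriv True (Imp (Or \<delta> \<epsilon>) \<gamma>)" if "\<delta> \<in> D" "\<epsilon> \<in> D" for \<delta> \<epsilon>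
  proof -
    obtain \<phi> \<psi> where "\<delta> = Next \<phi>" "\<epsilon> = Next \<psi>" "\<phi> \<notin> \<Delta>" "\<psi> \<notin> \<Delta>"
      using \<open>\<delta> \<in> D\<close> \<open>\<epsilon> \<in> D\<close> unfolding D_def by blast
    moreover from this have "Next (Or \<phi> \<psi>) \<in> D"
      using \<Delta> prime_theory_Or_iff unfolding D_def by blast
    ultimately show ?thesis
      using deriv_Or_Next by blast
  qed
  have "\<not> ded True (\<Gamma> \<union> Next ` \<Delta>) (Next \<psi>)" if "\<psi> \<notin> \<Delta>" for \<psi>
  proof
    assume "ded True (\<Gamma> \<union> Next ` \<Delta>) (Next \<psi>)"
    moreover have "\<Delta> \<noteq> {}"
      using \<Delta> deriv_Imp_refl prime_theory_deriv by blast
    ultimately obtain \<alpha> where "\<alpha> \<in> \<Delta>" "ded True \<Gamma> (Imp (Next \<alpha>) (Next \<psi>))"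
      using ded_Un_Next_imageD[where A = \<Delta>] \<Delta> prime_theory_And_iff by blast
    then have "Imp (Next \<alpha>) (Next \<psi>) \<in> \<Gamma>"
      using \<Gamma> prime_theory_ded by blast
    then have "Next (Imp \<alpha> \<psi>) \<in> \<Gamma>"
      using \<Gamma> prime_theory_deriv[OF \<Gamma> deriv.ax_N5[OF TrueI]] prime_theory_mp by blast
    then show False
      using \<open>\<alpha> \<in> \<Delta>\<close> \<open>\<psi> \<notin> \<Delta>\<close> \<open>successor \<Gamma> \<subseteq> \<Delta>\<close> \<Delta> prime_theory_mp
      unfolding successor_def by blast
  qed
  then have D_avoided: "\<And>\<delta>. \<delta> \<in> D \<Longrightarrow> \<not> ded True (\<Gamma> \<union> Next ` \<Delta>) \<delta>"
    unfolding D_def by blast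
  obtain M where "\<Gamma> \<union> Next ` \<Delta> \<subseteq> M" "prime_theory True M" "M \<inter> D = {}"
    using lindenbaum[OF D_nonempty D_Or_closed D_avoided] by blast
  moreover from this have "successor M = \<Delta>"
    unfolding successor_def D_def by blast
  ultimately show ?thesis
    by blast
qed

text \<open>Worlds have type form set set; the prime theory \<Gamma> is represented by the world {\<Gamma>}.\<close>

definition canon_W :: "bool \<Rightarrow> world set" where
  "canon_W fs = {{\<Gamma>} | \<Gamma>. prime_theory fs \<Gamma>}"

definition canon_le :: "world \<Rightarrow> world \<Rightarrow> bool" where
  "canon_le w v \<longleftrightarrow> \<Union>w \<subseteq> \<Union>v"

definition canon_f :: "world \<Rightarrow> world" where
  "canon_f w = {successor (\<Union>w)}"

definition canon_V :: "bool \<Rightarrow> nat \<Rightarrow> world set" where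
  "canon_V fs p = {w \<in> canon_W fs. Var p \<in> \<Union>w}"

abbreviation canon_eval :: "bool \<Rightarrow> form \<Rightarrow> world set" where
  "canon_eval fs \<equiv> eval (canon_W fs) canon_le canon_f (canon_V fs)"

lemma canon_truth:
  assumes "prime_theory fs \<Gamma>"
  shows "{\<Gamma>} \<in> canon_eval fs \<phi> \<longleftrightarrow> \<phi> \<in> \<Gamma>"
  using assms
proof (induction \<phi> arbitrary: \<Gamma>)
  case Bot
  then show ?case by (simp add: prime_theory_Bot)
next
  case (Var p)
  then show ?case by (auto simp: canon_V_def canon_W_def)
next
  case (And \<phi> \<psi>)
  then show ?case by (simp add: prime_theory_And_iff)
next
  case (Or \<phi> \<psi>)
  then show ?case by (simp add: prime_theory_Or_iff)
next
  case (Imp \<phi> \<psi>)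
  have "{\<Gamma>} \<in> canon_eval fs (Imp \<phi> \<psi>) \<longleftrightarrow>
      (\<forall>\<Delta>. prime_theory fs \<Delta> \<longrightarrow> \<Gamma> \<subseteq> \<Delta> \<longrightarrow> {\<Delta>} \<in> canon_eval fs \<phi> \<longrightarrow> {\<Delta>} \<in> canon_eval fs \<psi>)"
    using Imp.prems by (auto simp: up_interior_def canon_W_def canon_le_def)
  then show ?case
    using Imp.IH prime_theory_Imp_iff[OF Imp.prems] by auto
next
  case (Next \<phi>)
  have "{\<Gamma>} \<in> canon_eval fs (Next \<phi>) \<longleftrightarrow> {successor \<Gamma>} \<in> canon_eval fs \<phi>"
    using Next.prems by (auto simp: canon_W_def canon_f_def)
  then show ?case
    using Next.IH prime_theory_successor[OF Next.prems] by (simp add: successor_def)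
qed

lemma canon_expanding: "expanding_poset (canon_W fs) canon_le canon_f"
proof -
  have "canon_f w \<in> canon_W fs" if "w \<in> canon_W fs" for w
    using that prime_theory_successor by (auto simp: canon_W_def canon_f_def)
  moreover have "canon_le (canon_f w) (canon_f v)" if "canon_le w v" for w v
    using that by (auto simp: canon_le_def canon_f_def successor_def)
  moreover have "partial_order_on_set (canon_W fs) canon_le"
    unfolding partial_order_on_set_def canon_W_def canon_le_def by fastforce
  ultimately show ?thesis
    unfolding expanding_poset_def by blast
qed

lemma canon_persistent: "persistent_poset (canon_W True) canon_le canon_f"
  unfolding persistent_poset_def
proof (intro conjI canon_expanding ballI impI)
  fix w v assume "w \<in> canon_W True" "v \<in> canon_W True" "canon_le (canon_f w) v"
  then obtain \<Gamma> \<Delta> where "w = {\<Gamma>}" "v = {\<Delta>}" "prime_theory True \<Gamma>" "prime_theory True \<Delta>"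
    "successor \<Gamma> \<subseteq> \<Delta>"
    by (auto simp: canon_W_def canon_le_def canon_f_def)
  then obtain M where "\<Gamma> \<subseteq> M" "prime_theory True M" "successor M = \<Delta>"
    using prime_theory_successor_preimage by blast
  then show "\<exists>w'\<in>canon_W True. canon_le w w' \<and> canon_f w' = v"
    using \<open>w = {\<Gamma>}\<close> \<open>v = {\<Delta>}\<close>
    by (intro bexI[of _ "{M}"]) (auto simp: canon_W_def canon_le_def canon_f_def)
qed

lemma canon_valuation: "valuation (canon_W fs) canon_le (canon_V fs)"
  by (auto simp: valuation_def up_open_def canon_V_def canon_le_def)

lemma canon_complete:
  assumes "canon_eval fs \<phi> = canon_W fs"
  shows "deriv fs \<phi>"
proof (rule ccontr)
  assume "\<not> deriv fs \<phi>"
  then obtain M where "prime_theory fs M" "\<phi> \<notin> M"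
    using lindenbaum_formula ded_emptyD by blast
  moreover from this have "{M} \<in> canon_eval fs \<phi>"
    using assms by (auto simp: canon_W_def)
  ultimately show False
    using canon_truth by blast
qed

theorem theorem5p7:
  shows "(\<forall>\<phi>. valid_expanding \<phi> \<longrightarrow> ITL0 \<phi>) \<and> (\<forall>\<phi>. valid_persistent \<phi> \<longrightarrow> ITLFS \<phi>)"
proof (intro conjI allI impI)
  fix \<phi> assume "valid_expanding \<phi>"
  then have "canon_eval False \<phi> = canon_W False"
    using canon_expanding canon_valuation unfolding valid_expanding_def by blast
  then show "ITL0 \<phi>"
    unfolding ITL0_def by (rule canon_complete)
next
  fix \<phi> assume "valid_persistent \<phi>"
  then have "canon_eval True \<phi> = canon_W True"
    using canon_persistent canon_valuation unfolding valid_persistent_def by blast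
  then show "ITLFS \<phi>"
    unfolding ITLFS_def by (rule canon_complete)
qed

end
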